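(* Suppose the bornology of a large scale group $G$ has a countable basis. If $G$ is unbounded and locally bounded, then $G$ has infinitely many ends.
   Context: A large scale group is a group $G$ with a bornology $\mathcal B$ (a cover of $G$ closed under subsets and finite unions) closed under inverses and products; uniformly bounded covers are those refining $\{gB\}_{g\in G}$ for some $B\in\mathcal B$; bounded sets are members of $\mathcal B$; a basis of $\mathcal B$ is a subfamily such that each member of $\mathcal B$ lies in a member of it. $G$ is locally bounded if for every bounded $B\subseteq G$ the subgroup $\langle B\rangle$ generated by $B$ is bounded. For $A\subseteq G$ and a cover $\mathcal U$, $st(A,\mathcal U)$ is the union of the members of $\mathcal U$ meeting $A$. $A$ is coarsely clopen if $st(A,\mathcal U)\cap st(G\setminus A,\mathcal U)$ is bounded for every uniformly bounded $\mathcal U$. An end of $G$ is a family of unbounded coarsely clopen subsets of $G$ maximal with respect to the property that all finite intersections of its members are unbounded. *)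

theory Defs
  imports Main "HOL-Library.Countable_Set"
begin

text \<open>A large scale group: the group is the type 'a (class group_add, written additively,
not necessarily commutative), equipped with a bornology Bd :: 'a set set.\<close>

definition bornology :: "'a set set \<Rightarrow> bool" where
  "bornology Bd \<longleftrightarrow> \<Union>Bd = UNIV
     \<and> (\<forall>A\<in>Bd. \<forall>C. C \<subseteq> A \<longrightarrow> C \<in> Bd)
     \<and> (\<forall>A\<in>Bd. \<forall>C\<in>Bd. A \<union> C \<in> Bd)"

definition large_scale_group :: "('a::group_add) set set \<Rightarrow> bool" where
  "large_scale_group Bd \<longleftrightarrow> bornology Bd
     \<and> (\<forall>A\<in>Bd. uminus ` A \<in> Bd)
     \<and> (\<forall>A\<in>Bd. \<forall>C\<in>Bd. {a + c | a c. a \<in> A \<and> c \<in> C} \<in> Bd)"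

definition uniformly_bounded :: "('a::group_add) set set \<Rightarrow> 'a set set \<Rightarrow> bool" where
  "uniformly_bounded Bd U \<longleftrightarrow> \<Union>U = UNIV
     \<and> (\<exists>B\<in>Bd. \<forall>V\<in>U. \<exists>g. V \<subseteq> (\<lambda>x. g + x) ` B)"

definition star :: "'a set \<Rightarrow> 'a set set \<Rightarrow> 'a set" where
  "star A U = \<Union>{V\<in>U. V \<inter> A \<noteq> {}}"

definition coarsely_clopen :: "('a::group_add) set set \<Rightarrow> 'a set \<Rightarrow> bool" where
  "coarsely_clopen Bd A \<longleftrightarrow>
     (\<forall>U. uniformly_bounded Bd U \<longrightarrow> star A U \<inter> star (- A) U \<in> Bd)"

definition end_candidate :: "('a::group_add) set set \<Rightarrow> 'a set set \<Rightarrow> bool" where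
  "end_candidate Bd E \<longleftrightarrow>
     (\<forall>A\<in>E. A \<notin> Bd \<and> coarsely_clopen Bd A)
     \<and> (\<forall>F. F \<subseteq> E \<and> finite F \<and> F \<noteq> {} \<longrightarrow> \<Inter>F \<notin> Bd)"

definition is_end :: "('a::group_add) set set \<Rightarrow> 'a set set \<Rightarrow> bool" where
  "is_end Bd E \<longleftrightarrow> end_candidate Bd E
     \<and> (\<forall>E'. end_candidate Bd E' \<and> E \<subseteq> E' \<longrightarrow> E' = E)"

definition ends :: "('a::group_add) set set \<Rightarrow> 'a set set set" where
  "ends Bd = {E. is_end Bd E}"

definition is_add_subgroup :: "('a::group_add) set \<Rightarrow> bool" where
  "is_add_subgroup H \<longleftrightarrow> 0 \<in> H \<and> (\<forall>x\<in>H. \<forall>y\<in>H. x + y \<in> H) \<and> (\<forall>x\<in>H. - x \<in> H)"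

definition generated_subgroup :: "('a::group_add) set \<Rightarrow> 'a set" where
  "generated_subgroup A = \<Inter>{H. is_add_subgroup H \<and> A \<subseteq> H}"

definition locally_bounded :: "('a::group_add) set set \<Rightarrow> bool" where
  "locally_bounded Bd \<longleftrightarrow> (\<forall>B\<in>Bd. generated_subgroup B \<in> Bd)"

definition has_countable_basis :: "'a set set \<Rightarrow> bool" where
  "has_countable_basis Bd \<longleftrightarrow>
     (\<exists>C. countable C \<and> C \<subseteq> Bd \<and> (\<forall>A\<in>Bd. \<exists>D\<in>C. A \<subseteq> D))"

end

theory Submission
  imports Defs "HOL-Library.Infinite_Set" "HOL-Library.Nat_Bijection"
    "HOL-Library.Disjoint_Sets"
begin

text \<open>A countable basis together with local boundedness yields an increasing sequence of
bounded subgroups \<open>K\<^sub>0 \<subseteq> K\<^sub>1 \<subseteq> \<dots>\<close> absorbing every bounded set. Let \<open>level x\<close> be the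
least \<open>n\<close> with \<open>x \<in> K\<^sub>n\<close>. Translating by an element of \<open>K\<^sub>m\<close> does not change the level
of points outside \<open>K\<^sub>m\<close>, so the members of a uniformly bounded cover of scale
\<open>B \<subseteq> K\<^sub>m\<close> have constant level outside \<open>K\<^sub>m\<close>; hence every union of level sets is
coarsely clopen. As \<open>G\<close> is unbounded, infinitely many levels occur; splitting them into
infinitely many disjoint infinite sets gives infinitely many disjoint unbounded coarsely
clopen sets, and by Zorn's lemma they lie in pairwise different ends.\<close>

lemma is_add_subgroup_generated_subgroup: "is_add_subgroup (generated_subgroup A)"
  unfolding generated_subgroup_def is_add_subgroup_def by auto

lemma subset_generated_subgroup: "A \<subseteq> generated_subgroup A"
  unfolding generated_subgroup_def by auto

lemma generated_subgroup_mono: "A \<subseteq> B \<Longrightarrow> generated_subgroup A \<subseteq> generated_subgroup B"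
  unfolding generated_subgroup_def by auto

lemma add_mem_add_subgroup_iff:
  assumes "is_add_subgroup H" and "h \<in> H"
  shows "y + h \<in> H \<longleftrightarrow> y \<in> H"
proof
  assume "y + h \<in> H"
  then have "(y + h) + - h \<in> H" using assms unfolding is_add_subgroup_def by blast
  then show "y \<in> H" by (simp add: add.assoc)
qed (use assms in \<open>auto simp: is_add_subgroup_def\<close>)

lemma minus_add_mem_add_subgroup:
  "is_add_subgroup H \<Longrightarrow> x \<in> H \<Longrightarrow> y \<in> H \<Longrightarrow> - x + y \<in> H"
  unfolding is_add_subgroup_def by blast

lemma bornology_subset: "bornology Bd \<Longrightarrow> A \<in> Bd \<Longrightarrow> C \<subseteq> A \<Longrightarrow> C \<in> Bd"
  unfolding bornology_def by simp

lemma bornology_Un: "bornology Bd \<Longrightarrow> A \<in> Bd \<Longrightarrow> C \<in> Bd \<Longrightarrow> A \<union> C \<in> Bd"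
  unfolding bornology_def by simp

lemma bornology_singleton:
  assumes "bornology Bd"
  shows "{x} \<in> Bd"
proof -
  obtain A where "A \<in> Bd" "x \<in> A" using assms unfolding bornology_def by blast
  then show ?thesis using bornology_subset[OF assms] by blast
qed

lemma bornology_empty: "bornology Bd \<Longrightarrow> {} \<in> Bd"
  by (rule bornology_subset[OF _ bornology_singleton]) auto

lemma bornology_UN_finite:
  assumes "bornology Bd" and "finite I" and "\<And>i. i \<in> I \<Longrightarrow> A i \<in> Bd"
  shows "(\<Union>i\<in>I. A i) \<in> Bd"
  using assms(2,3)
proof (induction I rule: finite_induct)
  case empty
  then show ?case using bornology_empty[OF assms(1)] by simp
next
  case (insert i I)
  then show ?case by (simp add: bornology_Un[OF assms(1)])
qed

lemma ex_end_containing: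
  assumes "A \<notin> Bd" and "coarsely_clopen Bd A"
  shows "\<exists>E. is_end Bd E \<and> A \<in> E"
proof -
  define S where "S = {E. end_candidate Bd E \<and> A \<in> E}"
  have "{A} \<in> S"
    unfolding S_def end_candidate_def using assms by (auto simp: subset_singleton_iff)
  moreover have "\<Union>C \<in> S" if "C \<in> chains S" and "C \<noteq> {}" for C
  proof -
    have CS: "C \<subseteq> S" and chain: "subset.chain S C"
      using \<open>C \<in> chains S\<close> unfolding chains_alt_def subset.chain_def by auto
    have "\<Inter>F \<notin> Bd" if "F \<subseteq> \<Union>C" "finite F" "F \<noteq> {}" for F
    proof -
      obtain E where "E \<in> C" "F \<subseteq> E"
        using finite_subset_Union_chain[OF \<open>finite F\<close> \<open>F \<subseteq> \<Union>C\<close> \<open>C \<noteq> {}\<close> chain] by blast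
      then show ?thesis using CS that unfolding S_def end_candidate_def by auto
    qed
    then show ?thesis
      using CS \<open>C \<noteq> {}\<close> unfolding S_def end_candidate_def by blast
  qed
  ultimately have "\<forall>C\<in>chains S. \<exists>U\<in>S. \<forall>X\<in>C. X \<subseteq> U"
    by (metis Sup_upper empty_iff)
  then obtain M where "M \<in> S" and "\<forall>X\<in>S. M \<subseteq> X \<longrightarrow> X = M"
    using Zorn_Lemma2[of S] by blast
  then show ?thesis unfolding is_end_def S_def by auto
qed

lemma infinite_ends_if_disjoint_family:
  fixes A :: "nat \<Rightarrow> ('a::group_add) set"
  assumes "bornology Bd" and "disjoint_family A"
    and "\<And>i. A i \<notin> Bd" and "\<And>i. coarsely_clopen Bd (A i)"
  shows "infinite (ends Bd)"
proof -
  define E where "E i = (SOME E. is_end Bd E \<and> A i \<in> E)" for i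
  have E: "is_end Bd (E i)" "A i \<in> E i" for i
    unfolding E_def using someI_ex[OF ex_end_containing[OF assms(3,4)]] by blast+
  have "inj E"
  proof (rule injI, rule ccontr)
    fix i j assume "E i = E j" and "i \<noteq> j"
    then have "{A i, A j} \<subseteq> E i" using E by auto
    then have "\<Inter>{A i, A j} \<notin> Bd"
      using E(1)[of i] unfolding is_end_def end_candidate_def by blast
    then show False
      using \<open>i \<noteq> j\<close> assms(2) bornology_empty[OF assms(1)] by (simp add: disjoint_family_on_def)
  qed
  then have "infinite (range E)" by (rule range_inj_infinite)
  moreover have "range E \<subseteq> ends Bd" using E unfolding ends_def by auto
  ultimately show ?thesis using finite_subset by blast
qed

lemma infinite_nat_set_disjoint_infinite_parts:
  fixes L :: "nat set"
  assumes "infinite L"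
  shows "\<exists>S :: nat \<Rightarrow> nat set. disjoint_family S \<and> (\<forall>i. S i \<subseteq> L \<and> infinite (S i))"
proof -
  define S where "S i = range (\<lambda>k. enumerate L (prod_encode (i, k)))" for i
  have enumerate_eq_iff: "enumerate L m = enumerate L n \<longleftrightarrow> m = n" for m n
    using inj_enumerate[OF assms] by (simp add: inj_eq)
  have "inj (\<lambda>k. enumerate L (prod_encode (i, k)))" for i
    by (rule injI) (simp add: enumerate_eq_iff)
  then have "infinite (S i)" for i unfolding S_def by (rule range_inj_infinite)
  moreover have "S i \<subseteq> L" for i unfolding S_def using enumerate_in_set[OF assms] by auto
  moreover have "disjoint_family S"
    unfolding S_def disjoint_family_on_def by (auto simp: enumerate_eq_iff)
  ultimately show ?thesis by blast
qed

locale bounded_subgroup_exhaustion =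
  fixes Bd :: "('a::group_add) set set" and K :: "nat \<Rightarrow> 'a set"
  assumes bornology: "bornology Bd"
    and bounded: "K n \<in> Bd"
    and subgroup: "is_add_subgroup (K n)"
    and mono: "m \<le> n \<Longrightarrow> K m \<subseteq> K n"
    and exhausts: "B \<in> Bd \<Longrightarrow> \<exists>n. B \<subseteq> K n"
begin

definition level :: "'a \<Rightarrow> nat" where
  "level x = (LEAST n. x \<in> K n)"

lemma mem_K_level: "x \<in> K (level x)"
proof -
  obtain n where "{x} \<subseteq> K n" using exhausts[OF bornology_singleton[OF bornology]] by blast
  then show ?thesis unfolding level_def by (auto intro: LeastI)
qed

lemma level_le: "x \<in> K n \<Longrightarrow> level x \<le> n"
  unfolding level_def by (rule Least_le)

lemma less_level_iff: "m < level x \<longleftrightarrow> x \<notin> K m"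
proof
  show "m < level x \<Longrightarrow> x \<notin> K m" using level_le by fastforce
next
  assume "x \<notin> K m"
  show "m < level x"
  proof (rule ccontr)
    assume "\<not> m < level x"
    then have "K (level x) \<subseteq> K m" by (simp add: mono)
    then show False using mem_K_level \<open>x \<notin> K m\<close> by blast
  qed
qed

lemma mem_K_add_iff:
  assumes "h \<in> K m" and "y \<notin> K m"
  shows "y + h \<in> K n \<longleftrightarrow> y \<in> K n"
proof (cases "m \<le> n")
  case True
  then have "h \<in> K n" using assms(1) mono by blast
  then show ?thesis by (rule add_mem_add_subgroup_iff[OF subgroup])
next
  case False
  then have Kn: "K n \<subseteq> K m" using mono by simp
  then have "y + h \<notin> K n" using assms add_mem_add_subgroup_iff[OF subgroup] by blast
  moreover have "y \<notin> K n" using Kn assms(2) by blast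
  ultimately show ?thesis by simp
qed

lemma level_add: "h \<in> K m \<Longrightarrow> y \<notin> K m \<Longrightarrow> level (y + h) = level y"
  unfolding level_def using mem_K_add_iff by simp

lemma coarsely_clopen_level_vimage: "coarsely_clopen Bd (level -` S)"
  unfolding coarsely_clopen_def
proof (intro allI impI)
  fix U assume "uniformly_bounded Bd U"
  then obtain B where "B \<in> Bd" and B: "\<forall>V\<in>U. \<exists>g. V \<subseteq> (\<lambda>x. g + x) ` B"
    unfolding uniformly_bounded_def by blast
  obtain m where "B \<subseteq> K m" using exhausts[OF \<open>B \<in> Bd\<close>] by blast
  have same_level: "level z = level y" if "y \<notin> K m" "V \<in> U" "y \<in> V" "z \<in> V" for V y z
  proof -
    obtain g where "V \<subseteq> (\<lambda>x. g + x) ` B" using B \<open>V \<in> U\<close> by blast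
    then obtain b b' where "b \<in> B" "b' \<in> B" "y = g + b" "z = g + b'"
      using \<open>y \<in> V\<close> \<open>z \<in> V\<close> by blast
    then have "- b + b' \<in> K m"
      using \<open>B \<subseteq> K m\<close> minus_add_mem_add_subgroup[OF subgroup] by blast
    moreover have "z = y + (- b + b')" using \<open>y = g + b\<close> \<open>z = g + b'\<close> by (simp add: add.assoc)
    ultimately show ?thesis using level_add[OF _ \<open>y \<notin> K m\<close>] by simp
  qed
  have "star (level -` S) U \<inter> star (- (level -` S)) U \<subseteq> K m"
  proof (rule subsetI, rule ccontr)
    fix y assume "y \<in> star (level -` S) U \<inter> star (- (level -` S)) U" "y \<notin> K m"
    then obtain V W a c where "V \<in> U" "y \<in> V" "a \<in> V" "level a \<in> S"
      "W \<in> U" "y \<in> W" "c \<in> W" "level c \<notin> S"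
      unfolding star_def by blast
    have "level a = level y" using same_level \<open>y \<notin> K m\<close> \<open>V \<in> U\<close> \<open>y \<in> V\<close> \<open>a \<in> V\<close> .
    moreover have "level c = level y" using same_level \<open>y \<notin> K m\<close> \<open>W \<in> U\<close> \<open>y \<in> W\<close> \<open>c \<in> W\<close> .
    ultimately show False using \<open>level a \<in> S\<close> \<open>level c \<notin> S\<close> by simp
  qed
  then show "star (level -` S) U \<inter> star (- (level -` S)) U \<in> Bd"
    by (rule bornology_subset[OF bornology bounded])
qed

lemma infinite_range_level:
  assumes "UNIV \<notin> Bd"
  shows "infinite (range level)"
  unfolding infinite_nat_iff_unbounded
proof
  fix m
  have "K m \<noteq> UNIV" using assms bounded[of m] by auto
  then obtain x where "x \<notin> K m" by blast
  then show "\<exists>n>m. n \<in> range level" using less_level_iff by blast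
qed

lemma level_vimage_unbounded:
  assumes "S \<subseteq> range level" and "infinite S"
  shows "level -` S \<notin> Bd"
proof
  assume "level -` S \<in> Bd"
  then obtain m where "level -` S \<subseteq> K m" using exhausts by blast
  have "s \<le> m" if "s \<in> S" for s
  proof -
    obtain x where "s = level x" using \<open>s \<in> S\<close> assms(1) by blast
    then have "x \<in> K m" using \<open>level -` S \<subseteq> K m\<close> \<open>s \<in> S\<close> by blast
    then show ?thesis using \<open>s = level x\<close> level_le by simp
  qed
  then have "S \<subseteq> {..m}" by auto
  then show False using assms(2) finite_subset by blast
qed

end

lemma ex_bounded_subgroup_exhaustion:
  assumes "bornology Bd" and "has_countable_basis Bd" and "locally_bounded Bd"
  shows "\<exists>K. bounded_subgroup_exhaustion Bd K"
proof -
  obtain C where "countable C" "C \<subseteq> Bd" and basis: "\<forall>A\<in>Bd. \<exists>D\<in>C. A \<subseteq> D"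
    using assms(2) unfolding has_countable_basis_def by blast
  have "C \<noteq> {}" using basis bornology_empty[OF assms(1)] by blast
  define f where "f = from_nat_into C"
  have "range f = C"
    unfolding f_def using \<open>countable C\<close> \<open>C \<noteq> {}\<close> by simp
  define K where "K n = generated_subgroup (\<Union>i\<le>n. f i)" for n
  have "bounded_subgroup_exhaustion Bd K"
  proof
    show "bornology Bd" by (fact assms(1))
    show "is_add_subgroup (K n)" for n
      unfolding K_def by (rule is_add_subgroup_generated_subgroup)
    show "K m \<subseteq> K n" if "m \<le> n" for m n
      unfolding K_def using that by (intro generated_subgroup_mono UN_mono) auto
    show "K n \<in> Bd" for n
    proof -
      have "f i \<in> Bd" for i using \<open>range f = C\<close> \<open>C \<subseteq> Bd\<close> by blast
      then have "(\<Union>i\<le>n. f i) \<in> Bd" by (intro bornology_UN_finite[OF assms(1)]) simp_all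
      then show ?thesis using assms(3) unfolding K_def locally_bounded_def by simp
    qed
    show "\<exists>n. B \<subseteq> K n" if "B \<in> Bd" for B
    proof -
      obtain D where "D \<in> C" "B \<subseteq> D" using basis \<open>B \<in> Bd\<close> by blast
      then obtain i where "B \<subseteq> f i" using \<open>range f = C\<close> by blast
      also have "\<dots> \<subseteq> (\<Union>j\<le>i. f j)" by auto
      also have "\<dots> \<subseteq> K i" unfolding K_def by (rule subset_generated_subgroup)
      finally show ?thesis by blast
    qed
  qed
  then show ?thesis by blast
qed

theorem proposition9p2:
  fixes Bd :: "('a::group_add) set set"
  assumes "large_scale_group Bd"
    and "has_countable_basis Bd"
    and "UNIV \<notin> Bd"
    and "locally_bounded Bd"
  shows "infinite (ends Bd)"
proof -
  have "bornology Bd" using assms(1) unfolding large_scale_group_def by simp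
  then obtain K where "bounded_subgroup_exhaustion Bd K"
    using ex_bounded_subgroup_exhaustion assms(2,4) by blast
  then interpret bounded_subgroup_exhaustion Bd K .
  obtain S :: "nat \<Rightarrow> nat set"
    where "disjoint_family S" and S: "\<And>i. S i \<subseteq> range level \<and> infinite (S i)"
    using infinite_nat_set_disjoint_infinite_parts[OF infinite_range_level[OF assms(3)]] by blast
  show ?thesis
  proof (rule infinite_ends_if_disjoint_family[OF \<open>bornology Bd\<close>])
    show "disjoint_family (\<lambda>i. level -` S i)"
      using \<open>disjoint_family S\<close> unfolding disjoint_family_on_def by blast
    show "level -` S i \<notin> Bd" for i using S level_vimage_unbounded by blast
    show "coarsely_clopen Bd (level -` S i)" for i by (rule coarsely_clopen_level_vimage)
  qed
qed

end
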